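(* In the setting described in the context, let $D\subseteq A\subseteq D\cup T$. Let $[e_1,e_2]\in T$ and set $A'=A\cup\{[e_1,e_2]\}$. Let $L_1,L_2\in\Pi_A$ be the circuits with $e_1\in L_1$ and $e_2\in L_2$. Then $$\Pi_{A'}=\Pi'\cup\big(\Pi_A\setminus\{L_1,L_2,L^*_{1},L^*_{2}\}\big),$$ where the duals $L_1^*,L_2^*$ are taken with respect to $A$, and $\Pi'$ is given by the following two cases. (i) If $L_1=L_2$, or $L_1=L_1^*$, or $L_2=L_2^*$, then $\Pi'=\{L_1\cup L_1^*\cup L_2\cup L_2^*\}$, and this single circuit is shorted with respect to $A'$. (ii) Otherwise, $\Pi'=\{L_1\cup L_2^*,\ L_1^*\cup L_2\}$; these two circuits are duals of each other with respect to $A'$, and neither is shorted. In addition, if $L_2=L_1^*$ then $\Pi_{A'}=\Pi_A$.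
   Context: Let $n\ge4$, $V=\{0,\dots,n-1\}$, and let $E=\{(u,v)\in V\times V:u\ne v\}$ be the set of arcs, written $uv$. Let $\chi_e\in\mathbb R^E$ be unit vectors and $\chi_F=\sum_{e\in F}\chi_e$. Let $\delta^\pm(w)$ be the arcs leaving/entering $w$, let $\delta^+(S)=\{uv:u\in S,v\notin S\}$, let $\mathcal S=\{S\subset V:2\le|S|\le n-2\}$, and let $x(F)=\sum_{e\in F}x_e$. The polytope is $P^n=\{x\in\mathbb R^E: x(\delta^+(w))=x(\delta^-(w))=1\ \forall w,\ x(\delta^+(S))\ge1\ \forall S\in\mathcal S,\ x\ge0\}$. Fix $\bar x\in P^n\cap\{0,\tfrac12\}^E$ and let $E_{\bar x}=\{e:\bar x_e=\tfrac12\}$. For $a\in\{0,1\}^E$ let $\mathrm{pr}(a)=\sum_{e\in E_{\bar x}}a_e\chi_e$. Let $\mathcal S_{\bar x}=\{S\in\mathcal S:\bar x(\delta^+(S))=1\}$. Define the sets $$D=\{\mathrm{pr}(\chi_{\delta^+(u)}),\mathrm{pr}(\chi_{\delta^-(u)}):u\in V\}, \qquad T=\{\mathrm{pr}(\chi_{\delta^+(S)}):S\in\mathcal S_{\bar x}\}.$$ Every vector of $D\cup T$ equals $\chi_{e_1}+\chi_{e_2}$ for two distinct arcs $e_1,e_2\in E_{\bar x}$; it is written $[e_1,e_2]=[e_2,e_1]$. Let $A$ be a set with $D\subseteq A\subseteq D\cup T$. On $E_{\bar x}$ define the relation $e\sim_A e'$ iff there is $\bar e\in E_{\bar x}$ with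 $[e,\bar e]\in A$ and $[\bar e,e']\in A$. Let $\equiv_A$ be its transitive closure; this is an equivalence relation. The equivalence classes are called circuits, and they form the circuit partition $\Pi_A$ of $E_{\bar x}$. For $L\in\Pi_A$, the set $\{\bar e\in E_{\bar x}:\exists e\in L,\ [e,\bar e]\in A\}$ is nonempty and contained in a unique circuit, denoted $L^*_A$ and called the dual of $L$. The pair $\{L,L^*_A\}$ is a circuit pair. $L$ is called shorted if $L^*_A=L$. Define $\langle L,L^*\rangle_A=\{[e,\bar e]\in A: e\in L,\ \bar e\in L^*_A\}$. *)

theory Defs
  imports Main "HOL-Library.Library"
begin

type_synonym arc = "nat \<times> nat"

definition arcs :: "nat \<Rightarrow> arc set" where
  "arcs n = {(u,v). u < n \<and> v < n \<and> u \<noteq> v}"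

definition delta_out :: "nat \<Rightarrow> nat \<Rightarrow> arc set" where
  "delta_out n w = {(u,v) \<in> arcs n. u = w}"

definition delta_in :: "nat \<Rightarrow> nat \<Rightarrow> arc set" where
  "delta_in n w = {(u,v) \<in> arcs n. v = w}"

definition delta_cut :: "nat \<Rightarrow> nat set \<Rightarrow> arc set" where
  "delta_cut n S = {(u,v) \<in> arcs n. u \<in> S \<and> v \<notin> S}"

definition subtour_sets :: "nat \<Rightarrow> nat set set" where
  "subtour_sets n = {S. S \<subseteq> {..<n} \<and> 2 \<le> card S \<and> card S \<le> n - 2}"

definition in_P :: "nat \<Rightarrow> (arc \<Rightarrow> real) \<Rightarrow> bool" where
  "in_P n x \<longleftrightarrow>
     (\<forall>w<n. sum x (delta_out n w) = 1 \<and> sum x (delta_in n w) = 1) \<and>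
     (\<forall>S\<in>subtour_sets n. sum x (delta_cut n S) \<ge> 1) \<and>
     (\<forall>e\<in>arcs n. x e \<ge> 0)"

definition half_integral :: "nat \<Rightarrow> (arc \<Rightarrow> real) \<Rightarrow> bool" where
  "half_integral n x \<longleftrightarrow> (\<forall>e\<in>arcs n. x e = 0 \<or> x e = 1/2)"

definition Ex :: "nat \<Rightarrow> (arc \<Rightarrow> real) \<Rightarrow> arc set" where
  "Ex n x = {e \<in> arcs n. x e = 1/2}"

definition tight_sets :: "nat \<Rightarrow> (arc \<Rightarrow> real) \<Rightarrow> nat set set" where
  "tight_sets n x = {S \<in> subtour_sets n. sum x (delta_cut n S) = 1}"

text \<open>0/1 vectors supported on E_x are represented by their supports (sets of arcs);
  pr(chi_F) corresponds to F \<inter> E_x.\<close>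

definition Dset :: "nat \<Rightarrow> (arc \<Rightarrow> real) \<Rightarrow> arc set set" where
  "Dset n x = (\<lambda>w. delta_out n w \<inter> Ex n x) ` {..<n} \<union> (\<lambda>w. delta_in n w \<inter> Ex n x) ` {..<n}"

definition Tset :: "nat \<Rightarrow> (arc \<Rightarrow> real) \<Rightarrow> arc set set" where
  "Tset n x = (\<lambda>S. delta_cut n S \<inter> Ex n x) ` tight_sets n x"

text \<open>[e,f] \<in> A, where [e,f] = chi_e + chi_f with e, f distinct.\<close>
definition pair_in :: "arc set set \<Rightarrow> arc \<Rightarrow> arc \<Rightarrow> bool" where
  "pair_in A e f \<longleftrightarrow> e \<noteq> f \<and> {e, f} \<in> A"

definition sim_rel :: "nat \<Rightarrow> (arc \<Rightarrow> real) \<Rightarrow> arc set set \<Rightarrow> arc rel" where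
  "sim_rel n x A = {(e, e'). e \<in> Ex n x \<and> e' \<in> Ex n x \<and>
      (\<exists>f\<in>Ex n x. pair_in A e f \<and> pair_in A f e')}"

definition circuits :: "nat \<Rightarrow> (arc \<Rightarrow> real) \<Rightarrow> arc set set \<Rightarrow> arc set set" where
  "circuits n x A = Ex n x // ((sim_rel n x A)\<^sup>+)"

definition dual :: "nat \<Rightarrow> (arc \<Rightarrow> real) \<Rightarrow> arc set set \<Rightarrow> arc set \<Rightarrow> arc set" where
  "dual n x A L = (THE L'. L' \<in> circuits n x A \<and>
      {f \<in> Ex n x. \<exists>e\<in>L. pair_in A e f} \<subseteq> L')"

definition shorted :: "nat \<Rightarrow> (arc \<Rightarrow> real) \<Rightarrow> arc set set \<Rightarrow> arc set \<Rightarrow> bool" where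
  "shorted n x A L \<longleftrightarrow> dual n x A L = L"

end

theory Submission
  imports Defs
begin

text \<open>The circuits are the classes of the equivalence \<open>R\<close> generated by the two-step walks
  \<open>e - f - e'\<close> along pairs of \<open>A\<close>, and every pair \<open>[e, f] \<in> A\<close> maps the class of \<open>e\<close> onto the
  class of \<open>f\<close>; this is the dual. The only new two-step walks created by the pair \<open>[e1, e2]\<close>
  lead from a neighbour of \<open>e1\<close>, i.e. from \<open>L\<^sub>1\<^sup>*\<close>, to \<open>e2\<close>, and from \<open>L\<^sub>2\<^sup>*\<close> to \<open>e1\<close>. So the new
  equivalence is generated by \<open>R\<close> and the two links \<open>e1 \<sim> f2\<close>, \<open>e2 \<sim> f1\<close>: it merges \<open>L\<^sub>1\<close> with
  \<open>L\<^sub>2\<^sup>*\<close> and \<open>L\<^sub>1\<^sup>*\<close> with \<open>L\<^sub>2\<close>, and the two merged sets coalesce exactly when they meet, which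
  happens iff \<open>L\<^sub>1 = L\<^sub>2\<close>, \<open>L\<^sub>1 = L\<^sub>1\<^sup>*\<close> or \<open>L\<^sub>2 = L\<^sub>2\<^sup>*\<close>. The new pair makes the new circuits of
  \<open>e1\<close> and \<open>e2\<close> dual to each other.\<close>

(* HOL-Library's Preorder.equiv, visible through Defs, would capture the name equiv. *)
hide_const (open) Preorder.equiv

lemma equiv_merge:
  assumes "equiv V E" "M \<subseteq> V" "E `` M \<subseteq> M"
  shows "equiv V (E \<union> M \<times> M)"
proof -
  have sym: "sym E" and trans: "trans E" using assms(1) by (auto elim: equivE)
  have closed: "b \<in> M" if "(a, b) \<in> E \<or> (b, a) \<in> E" "a \<in> M" for a b
    using that assms(3) sym by (auto dest: symD)
  show ?thesis
  proof (rule equivI)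
    show "E \<union> M \<times> M \<subseteq> V \<times> V" "refl_on V (E \<union> M \<times> M)"
      using assms(1,2) by (auto elim!: equivE simp: refl_on_def)
    show "sym (E \<union> M \<times> M)" using sym by (auto simp: sym_def)
    show "trans (E \<union> M \<times> M)"
      using trans closed unfolding trans_def by blast
  qed
qed

lemma Image_merge:
  assumes "equiv V E" "E `` M \<subseteq> M" "a \<in> V"
  shows "(E \<union> M \<times> M) `` {a} = (if a \<in> M then M else E `` {a})"
proof (cases "a \<in> M")
  case True
  then have "E `` {a} \<subseteq> M" using assms(2) by blast
  with True show ?thesis by auto
qed auto

lemma quotient_merge:
  assumes E: "equiv V E" and M: "M \<subseteq> V" "M \<noteq> {}" "E `` M \<subseteq> M"
  shows "V // (E \<union> M \<times> M) = insert M {X \<in> V // E. X \<inter> M = {}}"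
proof (intro equalityI subsetI)
  fix X assume "X \<in> V // (E \<union> M \<times> M)"
  then obtain a where a: "a \<in> V" "X = (E \<union> M \<times> M) `` {a}" by (rule quotientE)
  have "E `` {a} \<inter> M = {}" if "a \<notin> M"
  proof -
    have "sym E" using E by (rule equivE)
    then show ?thesis using that M(3) unfolding sym_def by blast
  qed
  then show "X \<in> insert M {X \<in> V // E. X \<inter> M = {}}"
    using a Image_merge[OF E M(3) a(1)] quotientI[OF a(1)] by (cases "a \<in> M") simp_all
next
  fix X assume X: "X \<in> insert M {X \<in> V // E. X \<inter> M = {}}"
  show "X \<in> V // (E \<union> M \<times> M)"
  proof (cases "X = M")
    case True
    obtain m where m: "m \<in> M" using M(2) by blast
    then have "(E \<union> M \<times> M) `` {m} = M"
      using Image_merge[OF E M(3), of m] M(1) by (simp add: subset_iff)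
    then show ?thesis using quotientI[of m V "E \<union> M \<times> M"] m M(1) True by auto
  next
    case False
    then obtain a where a: "a \<in> V" "X = E `` {a}" "X \<inter> M = {}" using X by (auto elim: quotientE)
    then have "a \<notin> M" using equiv_class_self[OF E a(1)] by blast
    then have "X = (E \<union> M \<times> M) `` {a}" using Image_merge[OF E M(3) a(1)] a(2) by simp
    then show ?thesis using quotientI[OF a(1)] by simp
  qed
qed

lemma quotient_disjoint_Union_eq:
  assumes E: "equiv V E" and C: "C \<subseteq> V // E"
  shows "{X \<in> V // E. X \<inter> \<Union>C = {}} = V // E - C"
proof (intro equalityI subsetI)
  fix X assume "X \<in> {X \<in> V // E. X \<inter> \<Union>C = {}}"
  then show "X \<in> V // E - C" using in_quotient_imp_non_empty[OF E] by blast
next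
  fix X assume X: "X \<in> V // E - C"
  then have "X \<inter> Y = {}" if "Y \<in> C" for Y using quotient_disj[OF E] C that by blast
  then show "X \<in> {X \<in> V // E. X \<inter> \<Union>C = {}}" using X by blast
qed

lemma equiv_class_times_subset:
  assumes "equiv V E" "X \<subseteq> E `` {c}"
  shows "X \<times> X \<subseteq> E"
proof clarify
  fix a b assume "a \<in> X" "b \<in> X"
  then have "(a, c) \<in> E" "(c, b) \<in> E" using assms by (auto elim!: equivE dest: symD)
  then show "(a, b) \<in> E" using assms(1) by (auto elim!: equivE dest: transD)
qed

definition pairs_cover :: "nat \<Rightarrow> (arc \<Rightarrow> real) \<Rightarrow> arc set set \<Rightarrow> bool" where
  "pairs_cover n x A \<longleftrightarrow> (\<forall>X\<in>A. X \<subseteq> Ex n x) \<and> (\<forall>e\<in>Ex n x. \<exists>f. pair_in A e f)"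

abbreviation circuit_rel :: "nat \<Rightarrow> (arc \<Rightarrow> real) \<Rightarrow> arc set set \<Rightarrow> arc rel" where
  "circuit_rel n x A \<equiv> (sim_rel n x A)\<^sup>+"

lemma pair_in_sym: "pair_in A e f \<Longrightarrow> pair_in A f e"
  unfolding pair_in_def by (auto simp: insert_commute)

lemma pair_in_Ex: "pairs_cover n x A \<Longrightarrow> pair_in A e f \<Longrightarrow> e \<in> Ex n x \<and> f \<in> Ex n x"
  unfolding pairs_cover_def pair_in_def by blast

lemma pair_in_exists: "pairs_cover n x A \<Longrightarrow> e \<in> Ex n x \<Longrightarrow> \<exists>f. pair_in A e f"
  unfolding pairs_cover_def by blast

lemma sim_relI:
  "e \<in> Ex n x \<Longrightarrow> e' \<in> Ex n x \<Longrightarrow> f \<in> Ex n x \<Longrightarrow> pair_in A e f \<Longrightarrow> pair_in A f e'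
    \<Longrightarrow> (e, e') \<in> sim_rel n x A"
  unfolding sim_rel_def by blast

lemma finite_arcs: "finite (arcs n)"
  by (rule finite_subset[of _ "{..<n} \<times> {..<n}"]) (auto simp: arcs_def)

lemma card_half_support:
  assumes "finite F" "\<forall>e\<in>F. x e = 0 \<or> x e = (1/2::real)" "sum x F = 1"
  shows "card {e \<in> F. x e = 1/2} = 2"
proof -
  have "sum x F = sum x {e \<in> F. x e = 1/2}"
    using assms(1,2) by (intro sum.mono_neutral_right) auto
  also have "\<dots> = (\<Sum>e \<in> {e \<in> F. x e = 1/2}. 1/2)"
    by (rule sum.cong) auto
  finally show ?thesis using assms(3) by simp
qed

lemma pairs_cover_if_Dset_subset:
  assumes P: "in_P n x" and half: "half_integral n x"
    and D: "Dset n x \<subseteq> A" and AT: "A \<subseteq> Dset n x \<union> Tset n x"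
  shows "pairs_cover n x A"
  unfolding pairs_cover_def
proof (intro conjI ballI)
  fix X assume "X \<in> A"
  then show "X \<subseteq> Ex n x" using AT unfolding Dset_def Tset_def by blast
next
  fix e assume e: "e \<in> Ex n x"
  obtain u v where uv: "e = (u,v)" by fastforce
  define F where "F = delta_out n u \<inter> Ex n x"
  have u: "u < n" using e uv unfolding Ex_def arcs_def by auto
  have sub: "delta_out n u \<subseteq> arcs n" unfolding delta_out_def by auto
  have "card {e \<in> delta_out n u. x e = 1/2} = 2"
    using finite_subset[OF sub finite_arcs] half sub P u
    unfolding half_integral_def in_P_def by (intro card_half_support) auto
  moreover have "{e \<in> delta_out n u. x e = 1/2} = F"
    using sub unfolding F_def Ex_def by auto
  ultimately obtain a b where ab: "F = {a,b}" "a \<noteq> b" by (auto simp: card_2_iff)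
  have "F \<in> A" using D u unfolding F_def Dset_def by blast
  moreover have "e \<in> F" using e uv unfolding F_def Ex_def delta_out_def by auto
  ultimately show "\<exists>f. pair_in A e f" using ab unfolding pair_in_def
    by (metis doubleton_eq_iff insertE singletonD)
qed

lemma equiv_circuit_rel:
  assumes "pairs_cover n x A"
  shows "equiv (Ex n x) (circuit_rel n x A)"
proof (rule equivI)
  show "circuit_rel n x A \<subseteq> Ex n x \<times> Ex n x"
    by (rule trancl_subset_Sigma) (auto simp: sim_rel_def)
  show "refl_on (Ex n x) (circuit_rel n x A)"
  proof (rule refl_onI)
    fix e assume e: "e \<in> Ex n x"
    then obtain f where "pair_in A e f" using pair_in_exists[OF assms] by blast
    then have "(e, e) \<in> sim_rel n x A"
      using sim_relI[OF e e] pair_in_Ex[OF assms] pair_in_sym by blast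
    then show "(e, e) \<in> circuit_rel n x A" by blast
  qed
  show "sym (circuit_rel n x A)"
    by (rule sym_trancl) (auto simp: sym_def sim_rel_def intro: pair_in_sym)
qed (rule trans_trancl)

lemma circuit_eq_class:
  assumes "pairs_cover n x A" "L \<in> circuits n x A" "e \<in> L"
  shows "L = circuit_rel n x A `` {e}"
  using assms(2,3) equiv_circuit_rel[OF assms(1)] unfolding circuits_def
  by (metis equiv_class_eq quotientE Image_singleton_iff)

lemma sim_rel_pair_in:
  assumes cover: "pairs_cover n x A" and "(e, e') \<in> sim_rel n x A"
    and ef: "pair_in A e f" and ef': "pair_in A e' f'"
  shows "(f, f') \<in> circuit_rel n x A"
proof -
  obtain g where g: "g \<in> Ex n x" "pair_in A e g" "pair_in A g e'"
    using assms(2) unfolding sim_rel_def by blast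
  have "(f, g) \<in> sim_rel n x A" "(g, f') \<in> sim_rel n x A"
    using sim_relI[OF _ g(1) _ pair_in_sym[OF ef] g(2)] sim_relI[OF g(1) _ _ g(3) ef']
      pair_in_Ex[OF cover ef] pair_in_Ex[OF cover ef'] by blast+
  then show ?thesis by auto
qed

text \<open>Circuits map to circuits along the pairs of \<open>A\<close>; this is what makes the dual well defined.\<close>

lemma circuit_rel_pair_in:
  assumes cover: "pairs_cover n x A" and "(e, e') \<in> circuit_rel n x A"
    and "pair_in A e f" and "pair_in A e' f'"
  shows "(f, f') \<in> circuit_rel n x A"
  using assms(2,4)
proof (induction arbitrary: f' rule: trancl_induct)
  case (base e')
  then show ?case using sim_rel_pair_in[OF cover _ \<open>pair_in A e f\<close>] by blast
next
  case (step y z)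
  obtain h where h: "pair_in A y h"
    using step.hyps(2) pair_in_exists[OF cover] unfolding sim_rel_def by blast
  have "(f, h) \<in> circuit_rel n x A" using step.IH[OF h] .
  also have "(h, f') \<in> circuit_rel n x A"
    using sim_rel_pair_in[OF cover step.hyps(2) h step.prems] .
  finally show ?case .
qed

lemma pair_in_same_circuit:
  assumes cover: "pairs_cover n x A" and "pair_in A e f" and "pair_in A e f'"
  shows "(f, f') \<in> circuit_rel n x A"
proof -
  have "e \<in> Ex n x" using pair_in_Ex[OF cover assms(2)] by blast
  then have "(e, e) \<in> circuit_rel n x A"
    using equiv_circuit_rel[OF cover] by (auto elim: equivE simp: refl_on_def)
  then show ?thesis using circuit_rel_pair_in[OF cover _ assms(2,3)] by blast
qed

lemma dual_circuit:
  assumes cover: "pairs_cover n x A" and ef: "pair_in A e f"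
  shows "dual n x A (circuit_rel n x A `` {e}) = circuit_rel n x A `` {f}"
  unfolding dual_def
proof (rule the_equality)
  have eq: "equiv (Ex n x) (circuit_rel n x A)"
    using equiv_circuit_rel[OF cover] .
  have Ex: "e \<in> Ex n x" "f \<in> Ex n x" using pair_in_Ex[OF cover ef] by auto
  show "circuit_rel n x A `` {f} \<in> circuits n x A \<and>
    {g \<in> Ex n x. \<exists>e'\<in>circuit_rel n x A `` {e}. pair_in A e' g} \<subseteq> circuit_rel n x A `` {f}"
    using circuit_rel_pair_in[OF cover _ ef] Ex unfolding circuits_def by (auto intro: quotientI)
  fix L assume L: "L \<in> circuits n x A \<and>
    {g \<in> Ex n x. \<exists>e'\<in>circuit_rel n x A `` {e}. pair_in A e' g} \<subseteq> L"
  then have "f \<in> L" using Ex ef equiv_class_self[OF eq] by blast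
  then show "L = circuit_rel n x A `` {f}" using circuit_eq_class[OF cover] L by blast
qed

locale pair_insertion =
  fixes n :: nat and x :: "arc \<Rightarrow> real" and A :: "arc set set" and e1 e2 f1 f2 :: arc
  assumes cover: "pairs_cover n x A"
    and e1_ne_e2: "e1 \<noteq> e2" and e1_Ex: "e1 \<in> Ex n x" and e2_Ex: "e2 \<in> Ex n x"
    and pair_e1: "pair_in A e1 f1" and pair_e2: "pair_in A e2 f2"
begin

abbreviation A' :: "arc set set" where "A' \<equiv> insert {e1, e2} A"
abbreviation R :: "arc rel" where "R \<equiv> circuit_rel n x A"
abbreviation R' :: "arc rel" where "R' \<equiv> circuit_rel n x A'"

text \<open>In the notation of the theorem, \<open>M1 = L\<^sub>1 \<union> L\<^sub>2\<^sup>*\<close> and \<open>M2 = L\<^sub>1\<^sup>* \<union> L\<^sub>2\<close>.\<close>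

definition M1 :: "arc set" where "M1 = R `` {e1} \<union> R `` {f2}"
definition M2 :: "arc set" where "M2 = R `` {f1} \<union> R `` {e2}"

definition rest :: "arc set set" where
  "rest = circuits n x A - {R `` {e1}, R `` {e2}, R `` {f1}, R `` {f2}}"

lemma pair_in_insert_iff:
  "pair_in A' a b \<longleftrightarrow> pair_in A a b \<or> a = e1 \<and> b = e2 \<or> a = e2 \<and> b = e1"
  using e1_ne_e2 unfolding pair_in_def by (auto simp: doubleton_eq_iff)

lemma cover': "pairs_cover n x A'"
  using cover e1_Ex e2_Ex unfolding pairs_cover_def pair_in_insert_iff by blast

lemma equiv_R: "equiv (Ex n x) R"
  using equiv_circuit_rel[OF cover] .

lemma equiv_R': "equiv (Ex n x) R'"
  using equiv_circuit_rel[OF cover'] .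

lemma R_subset_R': "R \<subseteq> R'"
  by (rule trancl_mono_subset) (auto simp: sim_rel_def pair_in_insert_iff)

lemma f_Ex: "f1 \<in> Ex n x" "f2 \<in> Ex n x"
  using pair_in_Ex[OF cover pair_e1] pair_in_Ex[OF cover pair_e2] by auto

lemma new_pair: "pair_in A' e1 e2"
  using e1_ne_e2 unfolding pair_in_def by simp

lemma links_in_R': "(e1, f2) \<in> R'" "(e2, f1) \<in> R'"
proof -
  have "pair_in A' e2 f2" "pair_in A' e1 f1"
    using pair_e1 pair_e2 unfolding pair_in_insert_iff by simp_all
  then have "(e1, f2) \<in> sim_rel n x A'" "(e2, f1) \<in> sim_rel n x A'"
    using sim_relI[OF e1_Ex f_Ex(2) e2_Ex new_pair]
      sim_relI[OF e2_Ex f_Ex(1) e1_Ex pair_in_sym[OF new_pair]] by simp_all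
  then show "(e1, f2) \<in> R'" "(e2, f1) \<in> R'" by auto
qed

lemma neighbour_e1: "pair_in A' a e1 \<Longrightarrow> a \<noteq> e2 \<Longrightarrow> (f1, a) \<in> R"
proof -
  assume "pair_in A' a e1" "a \<noteq> e2"
  then have "pair_in A e1 a" using pair_in_sym unfolding pair_in_insert_iff by blast
  then show ?thesis using pair_in_same_circuit[OF cover pair_e1] by blast
qed

lemma neighbour_e2: "pair_in A' a e2 \<Longrightarrow> a \<noteq> e1 \<Longrightarrow> (f2, a) \<in> R"
proof -
  assume "pair_in A' a e2" "a \<noteq> e1"
  then have "pair_in A e2 a" using pair_in_sym unfolding pair_in_insert_iff by blast
  then show ?thesis using pair_in_same_circuit[OF cover pair_e2] by blast
qed

lemma R'_least:
  assumes S: "equiv (Ex n x) S" and "R \<subseteq> S" and "(e1, f2) \<in> S" and "(e2, f1) \<in> S"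
  shows "R' \<subseteq> S"
proof -
  have symS: "sym S" and transS: "trans S" and reflS: "refl_on (Ex n x) S"
    using S by (auto elim: equivE)
  have near_e1: "(a, e2) \<in> S" if "pair_in A' a e1" for a
  proof (cases "a = e2")
    case False
    then have "(f1, a) \<in> S" using neighbour_e1[OF that] \<open>R \<subseteq> S\<close> by blast
    with \<open>(e2, f1) \<in> S\<close> show ?thesis using symS transS by (meson symD transD)
  qed (use reflS e2_Ex in \<open>simp add: refl_on_def\<close>)
  have near_e2: "(a, e1) \<in> S" if "pair_in A' a e2" for a
  proof (cases "a = e1")
    case False
    then have "(f2, a) \<in> S" using neighbour_e2[OF that] \<open>R \<subseteq> S\<close> by blast
    with \<open>(e1, f2) \<in> S\<close> show ?thesis using symS transS by (meson symD transD)
  qed (use reflS e1_Ex in \<open>simp add: refl_on_def\<close>)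
  have "sim_rel n x A' \<subseteq> S"
  proof
    fix p assume "p \<in> sim_rel n x A'"
    then obtain a b g where p: "p = (a, b)" and a: "a \<in> Ex n x" and b: "b \<in> Ex n x"
      and ag: "pair_in A' a g" and gb: "pair_in A' g b"
      unfolding sim_rel_def by (cases p) auto
    consider "pair_in A a g" "pair_in A g b" | "g = e1" "b = e2" | "g = e2" "b = e1"
      | "a = e1" "g = e2" | "a = e2" "g = e1"
      using ag gb unfolding pair_in_insert_iff by blast
    then have "(a, b) \<in> S"
    proof cases
      case 1
      have "(a, b) \<in> sim_rel n x A"
        using sim_relI[OF a b _ 1] pair_in_Ex[OF cover 1(1)] by blast
      then show ?thesis using \<open>R \<subseteq> S\<close> by auto
    next
      case 2
      then show ?thesis using near_e1 ag by simp
    next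
      case 3
      then show ?thesis using near_e2 ag by simp
    next
      case 4
      then have "(b, a) \<in> S" using near_e2 pair_in_sym[OF gb] by simp
      with symS show ?thesis by (rule symD)
    next
      case 5
      then have "(b, a) \<in> S" using near_e1 pair_in_sym[OF gb] by simp
      with symS show ?thesis by (rule symD)
    qed
    then show "p \<in> S" using p by simp
  qed
  then have "R' \<subseteq> S\<^sup>+" by (rule trancl_mono_subset)
  then show ?thesis using transS by simp
qed

lemma R_class_eqI: "c \<in> R `` {a} \<Longrightarrow> c \<in> R `` {b} \<Longrightarrow> R `` {a} = R `` {b}"
  using equiv_class_nondisjoint[OF equiv_R] equiv_class_eq[OF equiv_R] by blast

lemma closed_M: "R `` M1 \<subseteq> M1" "R `` M2 \<subseteq> M2"
  unfolding M1_def M2_def by (blast intro: trancl_trans)+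

lemma M_subset_Ex: "M1 \<subseteq> Ex n x" "M2 \<subseteq> Ex n x"
  using equiv_type[OF equiv_R] unfolding M1_def M2_def by blast+

lemma in_M: "e1 \<in> M1" "f2 \<in> M1" "f1 \<in> M2" "e2 \<in> M2"
  using equiv_class_self[OF equiv_R] e1_Ex e2_Ex f_Ex unfolding M1_def M2_def by blast+

lemma M_subset_R'_class: "M1 \<subseteq> R' `` {e1}" "M2 \<subseteq> R' `` {e2}"
  using R_subset_R' links_in_R' unfolding M1_def M2_def by (blast intro: trancl_trans)+

lemma dual_class_f: "dual n x A (R `` {f1}) = R `` {e1}" "dual n x A (R `` {f2}) = R `` {e2}"
  using dual_circuit[OF cover pair_in_sym[OF pair_e1]] dual_circuit[OF cover pair_in_sym[OF pair_e2]]
  by auto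

lemma M_meet_iff:
  "M1 \<inter> M2 \<noteq> {} \<longleftrightarrow> R `` {e1} = R `` {e2} \<or> R `` {e1} = R `` {f1} \<or> R `` {e2} = R `` {f2}"
proof
  assume "M1 \<inter> M2 \<noteq> {}"
  then obtain c where "c \<in> R `` {e1} \<or> c \<in> R `` {f2}" and "c \<in> R `` {f1} \<or> c \<in> R `` {e2}"
    unfolding M1_def M2_def by blast
  then have "R `` {e1} = R `` {f1} \<or> R `` {e1} = R `` {e2} \<or> R `` {f2} = R `` {f1} \<or> R `` {f2} = R `` {e2}"
    using R_class_eqI[of c e1 f1] R_class_eqI[of c e1 e2] R_class_eqI[of c f2 f1] R_class_eqI[of c f2 e2]
    by blast
  moreover have "R `` {e2} = R `` {e1}" if "R `` {f2} = R `` {f1}"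
    using dual_class_f that by metis
  ultimately show "R `` {e1} = R `` {e2} \<or> R `` {e1} = R `` {f1} \<or> R `` {e2} = R `` {f2}"
    by argo
next
  have self: "e1 \<in> R `` {e1}" "e2 \<in> R `` {e2}"
    using equiv_class_self[OF equiv_R] e1_Ex e2_Ex by auto
  assume "R `` {e1} = R `` {e2} \<or> R `` {e1} = R `` {f1} \<or> R `` {e2} = R `` {f2}"
  then have "e1 \<in> M2 \<or> e2 \<in> M1"
    unfolding M1_def M2_def using self by (elim disjE) auto
  then show "M1 \<inter> M2 \<noteq> {}" using in_M by blast
qed

lemma rest_eq: "rest = {X \<in> Ex n x // R. X \<inter> (M1 \<union> M2) = {}}"
proof -
  let ?C = "{R `` {e1}, R `` {e2}, R `` {f1}, R `` {f2}}"
  have C: "?C \<subseteq> Ex n x // R"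
    using e1_Ex e2_Ex f_Ex by (auto intro: quotientI)
  have "\<Union>?C = M1 \<union> M2"
    unfolding M1_def M2_def by blast
  then show ?thesis
    unfolding rest_def circuits_def quotient_disjoint_Union_eq[OF equiv_R C, symmetric] by simp
qed

lemma merged_rel:
  assumes "M1 \<inter> M2 \<noteq> {}"
  shows "R' = R \<union> (M1 \<union> M2) \<times> (M1 \<union> M2)"
proof
  have "equiv (Ex n x) (R \<union> (M1 \<union> M2) \<times> (M1 \<union> M2))"
    using equiv_merge[OF equiv_R] M_subset_Ex closed_M by (simp add: Image_Un le_supI1 le_supI2)
  then show "R' \<subseteq> R \<union> (M1 \<union> M2) \<times> (M1 \<union> M2)"
    by (rule R'_least) (use in_M in auto)
  obtain c where "c \<in> R' `` {e1}" "c \<in> R' `` {e2}"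
    using assms M_subset_R'_class by blast
  then have "R' `` {e2} = R' `` {e1}"
    using equiv_class_nondisjoint[OF equiv_R'] equiv_class_eq[OF equiv_R'] by blast
  then have "M1 \<union> M2 \<subseteq> R' `` {e1}" using M_subset_R'_class by blast
  then show "R \<union> (M1 \<union> M2) \<times> (M1 \<union> M2) \<subseteq> R'"
    using equiv_class_times_subset[OF equiv_R'] R_subset_R' by blast
qed

lemma split_rel:
  assumes "M1 \<inter> M2 = {}"
  shows "R' = (R \<union> M1 \<times> M1) \<union> M2 \<times> M2"
proof
  have equiv1: "equiv (Ex n x) (R \<union> M1 \<times> M1)"
    using equiv_merge[OF equiv_R M_subset_Ex(1) closed_M(1)] .
  have "(R \<union> M1 \<times> M1) `` M2 \<subseteq> M2" using closed_M(2) assms by auto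
  then have "equiv (Ex n x) ((R \<union> M1 \<times> M1) \<union> M2 \<times> M2)"
    using equiv_merge[OF equiv1 M_subset_Ex(2)] by blast
  then show "R' \<subseteq> (R \<union> M1 \<times> M1) \<union> M2 \<times> M2"
    by (rule R'_least) (use in_M in auto)
  show "(R \<union> M1 \<times> M1) \<union> M2 \<times> M2 \<subseteq> R'"
    using equiv_class_times_subset[OF equiv_R' M_subset_R'_class(1)]
      equiv_class_times_subset[OF equiv_R' M_subset_R'_class(2)] R_subset_R' by blast
qed

lemma circuits_merged:
  assumes "M1 \<inter> M2 \<noteq> {}"
  shows "circuits n x A' = insert (M1 \<union> M2) rest" "shorted n x A' (M1 \<union> M2)"
proof -
  have closed: "R `` (M1 \<union> M2) \<subseteq> M1 \<union> M2" using closed_M by (auto simp: Image_Un)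
  have Ex: "M1 \<union> M2 \<subseteq> Ex n x" using M_subset_Ex by blast
  show "circuits n x A' = insert (M1 \<union> M2) rest"
    unfolding circuits_def merged_rel[OF assms] rest_eq
    using quotient_merge[OF equiv_R Ex _ closed] in_M by blast
  have "R' `` {e1} = M1 \<union> M2" "R' `` {e2} = M1 \<union> M2"
    unfolding merged_rel[OF assms] using Image_merge[OF equiv_R closed] e1_Ex e2_Ex in_M by simp_all
  then show "shorted n x A' (M1 \<union> M2)"
    unfolding shorted_def using dual_circuit[OF cover' new_pair] by simp
qed

lemma circuits_split:
  assumes "M1 \<inter> M2 = {}"
  shows "circuits n x A' = {M1, M2} \<union> rest"
    and "dual n x A' M1 = M2" "dual n x A' M2 = M1"
    and "\<not> shorted n x A' M1" "\<not> shorted n x A' M2"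
proof -
  have equiv1: "equiv (Ex n x) (R \<union> M1 \<times> M1)"
    using equiv_merge[OF equiv_R M_subset_Ex(1) closed_M(1)] .
  have closed2: "(R \<union> M1 \<times> M1) `` M2 \<subseteq> M2" using closed_M(2) assms by auto
  have ne: "M1 \<noteq> {}" "M2 \<noteq> {}" using in_M by blast+
  have "Ex n x // R' = insert M2 {X \<in> insert M1 {X \<in> Ex n x // R. X \<inter> M1 = {}}. X \<inter> M2 = {}}"
    unfolding split_rel[OF assms] quotient_merge[OF equiv1 M_subset_Ex(2) ne(2) closed2]
      quotient_merge[OF equiv_R M_subset_Ex(1) ne(1) closed_M(1)] ..
  then show "circuits n x A' = {M1, M2} \<union> rest"
    unfolding circuits_def rest_eq using assms by auto
  have "R' `` {e1} = M1" "R' `` {e2} = M2"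
    unfolding split_rel[OF assms]
    using Image_merge[OF equiv1 closed2] Image_merge[OF equiv_R closed_M(1)] e1_Ex e2_Ex in_M assms
    by auto
  moreover have "M1 \<noteq> M2" using assms in_M by blast
  ultimately show "dual n x A' M1 = M2" "dual n x A' M2 = M1"
    and "\<not> shorted n x A' M1" "\<not> shorted n x A' M2"
    unfolding shorted_def
    using dual_circuit[OF cover' new_pair] dual_circuit[OF cover' pair_in_sym[OF new_pair]] by auto
qed

lemma circuits_unchanged:
  assumes "R `` {e2} = R `` {f1}"
  shows "circuits n x A' = circuits n x A"
proof -
  have f1: "R `` {f1} = R `` {e2}" using assms by simp
  have f2: "R `` {f2} = R `` {e1}"
    using dual_circuit[OF cover pair_e2] dual_class_f(1) assms by simp
  have M: "M1 = R `` {e1}" "M2 = R `` {e2}"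
    unfolding M1_def M2_def f1 f2 by simp_all
  have rest: "rest = circuits n x A - {M1, M2}"
    unfolding rest_def f1 f2 M by (simp add: insert_commute)
  have in_circuits: "M1 \<in> circuits n x A" "M2 \<in> circuits n x A"
    unfolding M circuits_def using e1_Ex e2_Ex by (auto intro: quotientI)
  show ?thesis
  proof (cases "M1 \<inter> M2 = {}")
    case True
    then show ?thesis using circuits_split(1) in_circuits unfolding rest by (simp add: insert_absorb)
  next
    case False
    then obtain c where "c \<in> R `` {e1}" "c \<in> R `` {e2}" unfolding M by blast
    then have "M1 = M2" unfolding M by (rule R_class_eqI)
    then show ?thesis using circuits_merged(1)[OF False] in_circuits unfolding rest by (simp add: insert_absorb)
  qed
qed

end

theorem mainTheorem6:
  fixes n :: nat and x :: "arc \<Rightarrow> real" and A :: "arc set set"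
    and e1 e2 :: arc and L1 L2 :: "arc set"
  assumes "n \<ge> 4"
    and "in_P n x" and "half_integral n x"
    and "Dset n x \<subseteq> A" and "A \<subseteq> Dset n x \<union> Tset n x"
    and "e1 \<noteq> e2" and "{e1, e2} \<in> Tset n x"
    and "L1 \<in> circuits n x A" and "e1 \<in> L1"
    and "L2 \<in> circuits n x A" and "e2 \<in> L2"
  shows
   "let A' = insert {e1, e2} A;
        L1s = dual n x A L1; L2s = dual n x A L2;
        rest = circuits n x A - {L1, L2, L1s, L2s}
    in ((L1 = L2 \<or> L1 = L1s \<or> L2 = L2s) \<longrightarrow>
          circuits n x A' = {L1 \<union> L1s \<union> L2 \<union> L2s} \<union> rest \<and>
          shorted n x A' (L1 \<union> L1s \<union> L2 \<union> L2s))
     \<and> (\<not> (L1 = L2 \<or> L1 = L1s \<or> L2 = L2s) \<longrightarrow>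
          circuits n x A' = {L1 \<union> L2s, L1s \<union> L2} \<union> rest \<and>
          dual n x A' (L1 \<union> L2s) = L1s \<union> L2 \<and>
          dual n x A' (L1s \<union> L2) = L1 \<union> L2s \<and>
          \<not> shorted n x A' (L1 \<union> L2s) \<and> \<not> shorted n x A' (L1s \<union> L2))
     \<and> (L2 = L1s \<longrightarrow> circuits n x A' = circuits n x A)"
proof -
  have cover: "pairs_cover n x A" using assms(2-5) by (rule pairs_cover_if_Dset_subset)
  obtain S where "{e1, e2} = delta_cut n S \<inter> Ex n x" using assms(7) unfolding Tset_def by blast
  then have e_Ex: "e1 \<in> Ex n x" "e2 \<in> Ex n x" by (metis Int_lower2 insert_subset)+
  then obtain f1 f2 where "pair_in A e1 f1" "pair_in A e2 f2"
    using pair_in_exists[OF cover] by metis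
  then interpret pair_insertion n x A e1 e2 f1 f2
    using cover assms(6) e_Ex by unfold_locales
  have L: "L1 = R `` {e1}" "L2 = R `` {e2}"
    using circuit_eq_class[OF cover assms(8,9)] circuit_eq_class[OF cover assms(10,11)] .
  have D: "dual n x A L1 = R `` {f1}" "dual n x A L2 = R `` {f2}"
    unfolding L using dual_circuit[OF cover pair_e1] dual_circuit[OF cover pair_e2] .
  have U: "R `` {e1} \<union> R `` {f1} \<union> R `` {e2} \<union> R `` {f2} = M1 \<union> M2"
    unfolding M1_def M2_def by blast
  show ?thesis
    unfolding Let_def D unfolding L U M1_def[symmetric] M2_def[symmetric] rest_def[symmetric]
      M_meet_iff[symmetric]
    using circuits_merged circuits_split circuits_unchanged by simp
qed

end
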